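(* Let $R$ be a commutative ring, $M$ an $R$-module, $\underline{x}=x_1,\ldots,x_r$ an $M$-weakly pro-regular sequence and $\mathfrak{a}=\underline{x}R$. Then for every injective $R$-module $I$ the natural map $\Gamma_{\mathfrak{a}}(\operatorname{Hom}_R(M,I))\to\check{C}_{\underline{x}}\otimes_R\operatorname{Hom}_R(M,I)$ is a quasi-isomorphism.
   Context: $\Gamma_{\mathfrak{a}}(N)=\{n\in N:\mathfrak{a}^kn=0\text{ for some }k\}$, regarded as a complex in degree $0$. $\check{C}_{\underline{x}}=\bigotimes_j(0\to R\to R_{x_j}\to0)$ is the Čech complex (degrees $0,\ldots,r$). $\underline{x}$ is $M$-weakly pro-regular if for all $i>0$ the inverse system $\{H_i(\underline{x}^{(n)};M)\}_{n\ge1}$ of Koszul homology modules of $\underline{x}^{(n)}=x_1^n,\ldots,x_r^n$ (with the natural transition maps) is pro-zero, i.e. for every $n$ there is $m\ge n$ such that $H_i(\underline{x}^{(m)};M)\to H_i(\underline{x}^{(n)};M)$ is zero. *)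

theory Defs
  imports Main "HOL.Modules" "HOL-Library.Function_Algebras"
begin

text \<open>A general module N is given by a carrier set N inside
  an abelian group 'n with a scalar multiplication s (used for Hom_R(M,I), which
  lives inside the function space).  The sequence x_1..x_r is a list xs, indices 0..r-1.\<close>

definition xprod :: "'r::comm_ring_1 list \<Rightarrow> nat set \<Rightarrow> 'r" where
  "xprod xs J = (\<Prod>j\<in>J. xs ! j)"

definition idx_sets :: "nat \<Rightarrow> nat \<Rightarrow> nat set set" where
  "idx_sets r p = {J. J \<subseteq> {0..<r} \<and> card J = p}"

definition pos :: "nat \<Rightarrow> nat set \<Rightarrow> nat" where
  "pos j J = card {l\<in>J. l < j}"

definition ideal_of :: "'r::comm_ring_1 list \<Rightarrow> 'r set" where
  "ideal_of xs = module.span ((*) :: 'r \<Rightarrow> 'r \<Rightarrow> 'r) (set xs)"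

definition ideal_power :: "'r::comm_ring_1 set \<Rightarrow> nat \<Rightarrow> 'r set" where
  "ideal_power A k = module.span ((*) :: 'r \<Rightarrow> 'r \<Rightarrow> 'r)
      (prod_list ` {ys. length ys = k \<and> set ys \<subseteq> A})"

definition Gamma ::
  "('r::comm_ring_1 \<Rightarrow> 'n::ab_group_add \<Rightarrow> 'n) \<Rightarrow> 'n set \<Rightarrow> 'r set \<Rightarrow> 'n set" where
  "Gamma s N A = {n\<in>N. \<exists>k. \<forall>y\<in>ideal_power A k. s y n = 0}"

text \<open>K_i(y;M) = direct sum over J in idx_sets r i of copies of M; a chain is a function
  c :: nat set => 'm, only its values on idx_sets r i matter.\<close>

definition koszul_d ::
  "('r::comm_ring_1 \<Rightarrow> 'm::ab_group_add \<Rightarrow> 'm) \<Rightarrow> 'r list \<Rightarrow> (nat set \<Rightarrow> 'm) \<Rightarrow> nat set \<Rightarrow> 'm" where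
  "koszul_d s ys c J =
     (\<Sum>j\<in>{0..<length ys} - J. s ((-1) ^ pos j J * (ys ! j)) (c (insert j J)))"

definition koszul_cycle ::
  "('r::comm_ring_1 \<Rightarrow> 'm::ab_group_add \<Rightarrow> 'm) \<Rightarrow> 'r list \<Rightarrow> nat \<Rightarrow> (nat set \<Rightarrow> 'm) \<Rightarrow> bool" where
  "koszul_cycle s ys i c \<longleftrightarrow> (\<forall>J\<in>idx_sets (length ys) (i - 1). koszul_d s ys c J = 0)"

definition koszul_boundary ::
  "('r::comm_ring_1 \<Rightarrow> 'm::ab_group_add \<Rightarrow> 'm) \<Rightarrow> 'r list \<Rightarrow> nat \<Rightarrow> (nat set \<Rightarrow> 'm) \<Rightarrow> bool" where
  "koszul_boundary s ys i c \<longleftrightarrow>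
     (\<exists>b. \<forall>J\<in>idx_sets (length ys) i. koszul_d s ys b J = c J)"

definition powers :: "'r::comm_ring_1 list \<Rightarrow> nat \<Rightarrow> 'r list" where
  "powers xs n = map (\<lambda>x. x ^ n) xs"

text \<open>Natural transition map K(x^(m);M) -> K(x^(n);M), m >= n: e_J |-> x_J^(m-n) e_J.\<close>
definition koszul_trans ::
  "('r::comm_ring_1 \<Rightarrow> 'm::ab_group_add \<Rightarrow> 'm) \<Rightarrow> 'r list \<Rightarrow> nat \<Rightarrow> nat \<Rightarrow> (nat set \<Rightarrow> 'm) \<Rightarrow> nat set \<Rightarrow> 'm" where
  "koszul_trans s xs m n c J = s (xprod xs J ^ (m - n)) (c J)"

text \<open>Pro-zero of {H_i(x^(n);M)}_n for all i > 0.\<close>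
definition weakly_pro_regular ::
  "('r::comm_ring_1 \<Rightarrow> 'm::ab_group_add \<Rightarrow> 'm) \<Rightarrow> 'r list \<Rightarrow> bool" where
  "weakly_pro_regular s xs \<longleftrightarrow>
     (\<forall>i>0. \<forall>n\<ge>1. \<exists>m\<ge>n. \<forall>c. koszul_cycle s (powers xs m) i c \<longrightarrow>
        koszul_boundary s (powers xs n) i (koszul_trans s xs m n c))"

text \<open>(C_x tensor N)^p = direct sum over J in idx_sets r p of the localizations N_{x_J}.
  A p-cochain is written with a common exponent k as (c_J / x_J^k)_J with c_J in N.
  Differential: (d c)_J' = sum over j in J' of (-1)^pos(j,J') x_j^k c_{J'-j} / x_J'^k;
  cech_num gives the numerator.\<close>

definition cech_num ::
  "('r::comm_ring_1 \<Rightarrow> 'n::ab_group_add \<Rightarrow> 'n) \<Rightarrow> 'r list \<Rightarrow> nat \<Rightarrow> (nat set \<Rightarrow> 'n) \<Rightarrow> nat set \<Rightarrow> 'n" where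
  "cech_num s xs k c J' = (\<Sum>j\<in>J'. s ((-1) ^ pos j J' * (xs ! j) ^ k) (c (J' - {j})))"

definition cech_cocycle ::
  "('r::comm_ring_1 \<Rightarrow> 'n::ab_group_add \<Rightarrow> 'n) \<Rightarrow> 'n set \<Rightarrow> 'r list \<Rightarrow> nat \<Rightarrow> nat \<Rightarrow> (nat set \<Rightarrow> 'n) \<Rightarrow> bool" where
  "cech_cocycle s N xs p k c \<longleftrightarrow>
     (\<forall>J\<in>idx_sets (length xs) p. c J \<in> N) \<and>
     (\<forall>J\<in>idx_sets (length xs) (Suc p). \<exists>l. s (xprod xs J ^ l) (cech_num s xs k c J) = 0)"

text \<open>(c_J / x_J^k) is the image of the (p-1)-cochain (b_J / x_J^k'), equality taken
  in the localizations N_{x_J}.\<close>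
definition cech_coboundary ::
  "('r::comm_ring_1 \<Rightarrow> 'n::ab_group_add \<Rightarrow> 'n) \<Rightarrow> 'n set \<Rightarrow> 'r list \<Rightarrow> nat \<Rightarrow> nat \<Rightarrow> (nat set \<Rightarrow> 'n) \<Rightarrow> bool" where
  "cech_coboundary s N xs p k c \<longleftrightarrow>
     (\<exists>k' b. (\<forall>J\<in>idx_sets (length xs) (p - 1). b J \<in> N) \<and>
        (\<forall>J\<in>idx_sets (length xs) p. \<exists>l. s (xprod xs J ^ l)
            (s (xprod xs J ^ k) (cech_num s xs k' b J) - s (xprod xs J ^ k') (c J)) = 0))"

text \<open>The natural map Gamma_a(N) -> C_x tensor N (inclusion into degree 0, N_{x_emptyset} = N)
  is a quasi-isomorphism: it lands in, and is onto, H^0 = Z^0, and H^p = 0 for p >= 1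
  (Gamma_a(N) being concentrated in degree 0).\<close>
definition natural_map_quasi_iso ::
  "('r::comm_ring_1 \<Rightarrow> 'n::ab_group_add \<Rightarrow> 'n) \<Rightarrow> 'n set \<Rightarrow> 'r list \<Rightarrow> bool" where
  "natural_map_quasi_iso s N xs \<longleftrightarrow>
     Gamma s N (ideal_of xs) = {n\<in>N. cech_cocycle s N xs 0 0 (\<lambda>_. n)} \<and>
     (\<forall>p\<ge>1. \<forall>k c. cech_cocycle s N xs p k c \<longrightarrow> cech_coboundary s N xs p k c)"

definition injective_module ::
  "('r::comm_ring_1 \<Rightarrow> 'i::ab_group_add \<Rightarrow> 'i) \<Rightarrow> bool" where
  "injective_module sI \<longleftrightarrow>
     (\<forall>J f. module.subspace ((*) :: 'r \<Rightarrow> 'r \<Rightarrow> 'r) J \<and>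
        (\<forall>a\<in>J. \<forall>b\<in>J. f (a + b) = f a + f b) \<and> (\<forall>c. \<forall>a\<in>J. f (c * a) = sI c (f a))
        \<longrightarrow> (\<exists>g. module_hom ((*) :: 'r \<Rightarrow> 'r \<Rightarrow> 'r) sI g \<and> (\<forall>a\<in>J. g a = f a)))"

definition Hom_carrier ::
  "('r::comm_ring_1 \<Rightarrow> 'm::ab_group_add \<Rightarrow> 'm) \<Rightarrow> ('r \<Rightarrow> 'i::ab_group_add \<Rightarrow> 'i) \<Rightarrow> ('m \<Rightarrow> 'i) set" where
  "Hom_carrier sM sI = {f. module_hom sM sI f}"

definition Hom_scale ::
  "('r::comm_ring_1 \<Rightarrow> 'i::ab_group_add \<Rightarrow> 'i) \<Rightarrow> 'r \<Rightarrow> ('m \<Rightarrow> 'i) \<Rightarrow> ('m \<Rightarrow> 'i)" where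
  "Hom_scale sI r f = (\<lambda>m. sI r (f m))"

end

theory Submission
  imports Defs
begin

text \<open>In degree 0: an element killed by a power of each generator x_j is killed by a power
  of the ideal, since a long enough product of elements of the ideal has many factors
  from a single x_j R.

  In degree p >= 1 the point is a duality between the Cech complex of Hom(M,I) and the
  Koszul complexes of M.  After multiplying a Cech cocycle by a large power of the x_J,
  its coboundary numerators vanish on the nose, and the cocycle becomes a homomorphism
  K_p(x^K; M) -> I killing Koszul boundaries.  Weak pro-regularity yields m >= K such that
  its composite with the transition map kills the Koszul cycles of x^m, so it factors
  through the Koszul differential; injectivity of I (Baer's criterion plus Zorn's lemma)
  extends the factorisation to all of K_(p-1)(x^m; M).  Its components form the
  (p-1)-cochain whose coboundary is the given cocycle.\<close>

lemma sum_fun_apply: "(sum f A) x = (\<Sum>a\<in>A. f a x)"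
  for f :: "'a \<Rightarrow> 'b \<Rightarrow> 'c::comm_monoid_add"
  by (induct A rule: infinite_finite_induct) auto

lemma module_mult: "module ((*) :: 'a::comm_ring_1 \<Rightarrow> 'a \<Rightarrow> 'a)"
  by unfold_locales (auto simp: algebra_simps)

lemma Hom_scale_apply [simp]: "Hom_scale s r f x = s r (f x)"
  by (simp add: Hom_scale_def)

lemma module_Hom_scale:
  assumes m: "module s" shows "module (Hom_scale s)"
  by unfold_locales (auto simp: fun_eq_iff module.scale_right_distrib[OF m]
      module.scale_left_distrib[OF m] module.scale_scale[OF m] module.scale_one[OF m])

lemma Hom_scale_in_Hom_carrier:
  assumes "module sM" "module sI" "f \<in> Hom_carrier sM sI"
  shows "Hom_scale sI a f \<in> Hom_carrier sM sI"
  using module_pair.module_hom_scale[of sM sI f a] assms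
  by (simp add: module_pair_def Hom_carrier_def Hom_scale_def)

section \<open>Torsion elements as Cech 0-cocycles\<close>

lemma span_annihilates:
  assumes m: "module s" and S: "\<forall>y\<in>S. s y n = 0" and y: "y \<in> module.span (*) S"
  shows "s y n = 0"
proof -
  have "module.subspace (*) {y. s y n = 0}"
    unfolding module.subspace_def[OF module_mult]
    using m by (auto simp: module.scale_left_distrib module.scale_scale[OF m, symmetric]
        module.scale_zero_left[OF m] module.scale_zero_right[OF m])
  then show ?thesis
    using module.span_minimal[OF module_mult, of S "{y. s y n = 0}"] S y by auto
qed

text \<open>Pigeonhole: expanding each factor as c_i g + b_i with b_i in the ideal of the
  remaining generators, every term has either L factors g or more than
  length hs * L factors b_i.\<close>
lemma prod_span_annihilates:
  assumes m: "module s" and g: "\<forall>g\<in>set gs. s (g ^ L) n = 0"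
  shows "finite I \<Longrightarrow> card I > length gs * L \<Longrightarrow> (\<forall>i\<in>I. y i \<in> module.span (*) (set gs))
     \<Longrightarrow> s (\<Prod>i\<in>I. y i) n = 0"
  using g
proof (induction gs arbitrary: I y)
  case Nil
  then obtain i where "i \<in> I" by fastforce
  with Nil have "y i = 0" by (simp add: module.span_empty[OF module_mult])
  with \<open>i\<in>I\<close> Nil have "(\<Prod>i\<in>I. y i) = 0" by (intro prod_zero) auto
  then show ?case using m by (simp add: module.scale_zero_left)
next
  case (Cons g hs)
  have "\<forall>i\<in>I. \<exists>k. y i - k * g \<in> module.span (*) (set hs)"
    using Cons.prems(3) module.span_breakdown_eq[OF module_mult] by (simp only: list.set) blast
  then obtain c where c: "\<forall>i\<in>I. y i - c i * g \<in> module.span (*) (set hs)" by metis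
  define b where "b i = y i - c i * g" for i
  have "(\<Prod>i\<in>I. y i) = (\<Prod>i\<in>I. c i * g + b i)"
    by (rule prod.cong) (auto simp: b_def)
  also have "\<dots> = (\<Sum>X\<in>Pow I. (\<Prod>i\<in>X. c i * g) * (\<Prod>i\<in>I-X. b i))"
    by (rule prod_add) (fact Cons.prems(1))
  finally have expand: "(\<Prod>i\<in>I. y i) = \<dots>" .
  have "s ((\<Prod>i\<in>X. c i * g) * (\<Prod>i\<in>I-X. b i)) n = 0" if X: "X \<in> Pow I" for X
  proof (cases "card X \<ge> L")
    case True
    have "(\<Prod>i\<in>X. c i * g) = (\<Prod>i\<in>X. c i) * g ^ (card X - L) * g ^ L"
      using True by (simp add: prod.distrib mult.assoc power_add[symmetric])
    then have "s ((\<Prod>i\<in>X. c i * g) * (\<Prod>i\<in>I-X. b i)) n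
       = s ((\<Prod>i\<in>X. c i) * g ^ (card X - L) * (\<Prod>i\<in>I-X. b i)) (s (g ^ L) n)"
      using m by (simp add: module.scale_scale ac_simps)
    also have "\<dots> = 0" using Cons.prems(4) m by (simp add: module.scale_zero_right)
    finally show ?thesis .
  next
    case False
    have "finite X" using X Cons.prems(1) finite_subset by auto
    then have "card (I - X) = card I - card X" using X by (simp add: card_Diff_subset)
    then have "card (I - X) > length hs * L" using False Cons.prems(2) by simp
    moreover have "\<forall>i\<in>I-X. b i \<in> module.span (*) (set hs)" using c b_def by auto
    ultimately have "s (\<Prod>i\<in>I-X. b i) n = 0"
      using Cons.IH[of "I - X" b] Cons.prems by auto
    then show ?thesis using m
      by (simp add: module.scale_scale[OF m, symmetric] module.scale_zero_right)
  qed
  then show ?case unfolding expand using m by (simp add: module.scale_sum_left)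
qed

lemma prod_list_conv_prod_nth: "prod_list xs = (\<Prod>i<length xs. xs ! i)"
  by (induct xs) (simp_all del: prod.lessThan_Suc add: prod.lessThan_Suc_shift)

lemma idx_sets_0: "idx_sets r 0 = {{}}"
  unfolding idx_sets_def using finite_subset by fastforce

lemma idx_sets_1: "idx_sets r (Suc 0) = (\<lambda>j. {j}) ` {0..<r}"
  unfolding idx_sets_def by (auto simp: card_1_singleton_iff)

lemma cech_cocycle_0_iff:
  assumes m: "module s"
  shows "cech_cocycle s N xs 0 0 (\<lambda>_. n) \<longleftrightarrow> n \<in> N \<and> (\<forall>j<length xs. \<exists>l. s ((xs ! j) ^ l) n = 0)"
proof -
  have "pos j {j} = 0" for j unfolding pos_def by simp
  then show ?thesis
    unfolding cech_cocycle_def idx_sets_0 idx_sets_1 cech_num_def xprod_def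
    using m by (auto simp: module.scale_one[OF m])
qed

lemma annihilated_by_common_power:
  assumes m: "module s" and l: "\<forall>j<length xs. \<exists>l. s ((xs ! j) ^ l) n = 0"
  obtains L where "\<forall>g\<in>set xs. s (g ^ L) n = 0"
proof -
  obtain lf where lf: "\<forall>j<length xs. s ((xs ! j) ^ lf j) n = 0" using l by metis
  define L where "L = (\<Sum>j<length xs. lf j)"
  have "s (g ^ L) n = 0" if g: "g \<in> set xs" for g
  proof -
    obtain j where j: "j < length xs" "g = xs ! j" using g by (auto simp: in_set_conv_nth)
    have "lf j \<le> L" unfolding L_def using j by (intro member_le_sum) auto
    then have "g ^ L = g ^ (L - lf j) * g ^ lf j" by (simp add: power_add[symmetric])
    then show "s (g ^ L) n = 0" using lf j m
      by (simp add: module.scale_scale[OF m, symmetric] module.scale_zero_right[OF m])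
  qed
  then show thesis using that by blast
qed

lemma Gamma_eq_cech_cocycles_0:
  assumes m: "module s"
  shows "Gamma s N (ideal_of xs) = {n\<in>N. cech_cocycle s N xs 0 0 (\<lambda>_. n)}"
proof (intro set_eqI iffI)
  fix n assume "n \<in> Gamma s N (ideal_of xs)"
  then obtain k where n: "n \<in> N" and k: "\<forall>y\<in>ideal_power (ideal_of xs) k. s y n = 0"
    unfolding Gamma_def by auto
  have "s ((xs ! j) ^ k) n = 0" if "j < length xs" for j
  proof -
    have "xs ! j \<in> ideal_of xs" unfolding ideal_of_def
      using that by (intro module.span_base[OF module_mult]) auto
    then have "prod_list (replicate k (xs ! j)) \<in> ideal_power (ideal_of xs) k"
      unfolding ideal_power_def
      by (intro module.span_base[OF module_mult] image_eqI[where x="replicate k (xs ! j)"]) auto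
    then show ?thesis using k by simp
  qed
  then show "n \<in> {n\<in>N. cech_cocycle s N xs 0 0 (\<lambda>_. n)}"
    using n by (auto simp: cech_cocycle_0_iff[OF m])
next
  fix n assume "n \<in> {n\<in>N. cech_cocycle s N xs 0 0 (\<lambda>_. n)}"
  then have n: "n \<in> N" and "\<forall>j<length xs. \<exists>l. s ((xs ! j) ^ l) n = 0"
    by (auto simp: cech_cocycle_0_iff[OF m])
  then obtain L where L: "\<forall>g\<in>set xs. s (g ^ L) n = 0"
    using annihilated_by_common_power[OF m] by blast
  have "s y n = 0" if y: "y \<in> ideal_power (ideal_of xs) (length xs * L + 1)" for y
  proof (rule span_annihilates[OF m _ y[unfolded ideal_power_def]], rule ballI)
    fix z assume "z \<in> prod_list ` {ys. length ys = length xs * L + 1 \<and> set ys \<subseteq> ideal_of xs}"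
    then obtain ys where ys: "length ys = length xs * L + 1" "set ys \<subseteq> ideal_of xs"
      and z: "z = prod_list ys"
      by auto
    have "s (\<Prod>i<length ys. ys ! i) n = 0"
      by (rule prod_span_annihilates[OF m L]) (use ys in \<open>auto simp: ideal_of_def\<close>)
    then show "s z n = 0" by (simp add: z prod_list_conv_prod_nth)
  qed
  then show "n \<in> Gamma s N (ideal_of xs)" using n unfolding Gamma_def by auto
qed

section \<open>Extending homomorphisms into an injective module\<close>

definition hom_graph ::
  "('r::comm_ring_1 \<Rightarrow> 'a::ab_group_add \<Rightarrow> 'a) \<Rightarrow> ('r \<Rightarrow> 'i::ab_group_add \<Rightarrow> 'i) \<Rightarrow> 'a set \<Rightarrow>
    ('a \<Rightarrow> 'i) \<Rightarrow> ('a \<times> 'i) set \<Rightarrow> bool" where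
  "hom_graph s sI V f G \<longleftrightarrow>
    (\<forall>a y y'. (a,y)\<in>G \<longrightarrow> (a,y')\<in>G \<longrightarrow> y = y') \<and>
    (\<forall>a b ya yb. (a,ya)\<in>G \<longrightarrow> (b,yb)\<in>G \<longrightarrow> (a+b, ya+yb)\<in>G) \<and>
    (\<forall>c a y. (a,y)\<in>G \<longrightarrow> (s c a, sI c y)\<in>G) \<and>
    (\<forall>a\<in>V. (a, f a)\<in>G)"

context
  fixes s :: "'r::comm_ring_1 \<Rightarrow> 'a::ab_group_add \<Rightarrow> 'a" and sI :: "'r \<Rightarrow> 'i::ab_group_add \<Rightarrow> 'i"
    and V :: "'a set" and f :: "'a \<Rightarrow> 'i" and G :: "('a \<times> 'i) set"
  assumes G: "hom_graph s sI V f G"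
begin

lemma hom_graph_functional: "(a,y)\<in>G \<Longrightarrow> (a,y')\<in>G \<Longrightarrow> y = y'"
  using G unfolding hom_graph_def by blast

lemma hom_graph_add: "(a,ya)\<in>G \<Longrightarrow> (b,yb)\<in>G \<Longrightarrow> (a+b, ya+yb) \<in> G"
  using G unfolding hom_graph_def by blast

lemma hom_graph_scale: "(a,y)\<in>G \<Longrightarrow> (s c a, sI c y) \<in> G"
  using G unfolding hom_graph_def by blast

lemma hom_graph_base: "a \<in> V \<Longrightarrow> (a, f a) \<in> G"
  using G unfolding hom_graph_def by blast

lemma hom_graph_unique: "(a,y)\<in>G \<Longrightarrow> (THE y. (a,y)\<in>G) = y"
  by (blast intro: the_equality hom_graph_functional)

context
  assumes ms: "module s" and mI: "module sI"
begin

lemma hom_graph_diff: "(a,ya)\<in>G \<Longrightarrow> (b,yb)\<in>G \<Longrightarrow> (a - b, ya - yb) \<in> G"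
  using hom_graph_add[OF _ hom_graph_scale[of b yb "-1"]]
  by (simp add: module.scale_minus_left[OF ms] module.scale_minus_left[OF mI]
      module.scale_one[OF ms] module.scale_one[OF mI])

lemma hom_graph_zero: "module.subspace s V \<Longrightarrow> (0, 0) \<in> G"
  using hom_graph_scale[OF hom_graph_base, of 0 0] module.subspace_0[OF ms, of V]
  by (simp add: module.scale_zero_left[OF ms] module.scale_zero_left[OF mI])

lemma hom_graph_adjoin:
  assumes G0: "(0, 0) \<in> G" and e: "\<forall>r y. (s r a, y) \<in> G \<longrightarrow> y = sI r e"
  shows "\<exists>G'. hom_graph s sI V f G' \<and> G \<subseteq> G' \<and> (a, e) \<in> G'"
proof -
  define G' where "G' = {(w + s r a, y + sI r e) | w y r. (w,y)\<in>G}"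
  have memG': "(b,z) \<in> G'" if "(w,y)\<in>G" "b = w + s r a" "z = y + sI r e" for b z w y r
    using that unfolding G'_def by blast
  have memG'E: "\<exists>w y r. (w,y)\<in>G \<and> b = w + s r a \<and> z = y + sI r e" if "(b,z) \<in> G'" for b z
    using that unfolding G'_def by blast
  have "hom_graph s sI V f G'"
    unfolding hom_graph_def
  proof (intro conjI allI impI ballI)
    fix b z z' assume "(b,z) \<in> G'" "(b,z') \<in> G'"
    then obtain w y r w' y' r' where W: "(w,y)\<in>G" "(w',y')\<in>G" "b = w + s r a"
      "z = y + sI r e" "b = w' + s r' a" "z' = y' + sI r' e"
      using memG'E by metis
    have "s (r - r') a = w' - w"
      using W by (simp add: module.scale_left_diff_distrib[OF ms] algebra_simps)
    then have "y' - y = sI (r - r') e" using e hom_graph_diff[OF W(2,1)] by simp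
    then show "z = z'" using W by (simp add: module.scale_left_diff_distrib[OF mI] algebra_simps)
  next
    fix b1 b2 z1 z2 assume "(b1,z1) \<in> G'" "(b2,z2) \<in> G'"
    then obtain w1 y1 r1 w2 y2 r2 where W: "(w1,y1)\<in>G" "b1 = w1 + s r1 a" "z1 = y1 + sI r1 e"
      "(w2,y2)\<in>G" "b2 = w2 + s r2 a" "z2 = y2 + sI r2 e"
      using memG'E by metis
    have "b1 + b2 = (w1 + w2) + s (r1 + r2) a" "z1 + z2 = (y1 + y2) + sI (r1 + r2) e"
      using W by (simp_all add: module.scale_left_distrib[OF ms] module.scale_left_distrib[OF mI]
          algebra_simps)
    then show "(b1 + b2, z1 + z2) \<in> G'" by (intro memG'[OF hom_graph_add[OF W(1,4)]])
  next
    fix c b z assume "(b,z) \<in> G'"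
    then obtain w y r where W: "(w,y)\<in>G" "b = w + s r a" "z = y + sI r e" using memG'E by metis
    have "s c b = s c w + s (c * r) a" "sI c z = sI c y + sI (c * r) e"
      using W by (simp_all add: module.scale_right_distrib[OF ms] module.scale_right_distrib[OF mI]
          module.scale_scale[OF ms] module.scale_scale[OF mI])
    then show "(s c b, sI c z) \<in> G'" by (intro memG'[OF hom_graph_scale[OF W(1)]])
  next
    fix b assume "b \<in> V"
    then show "(b, f b) \<in> G'"
      by (intro memG'[OF hom_graph_base, of b _ 0])
        (simp_all add: module.scale_zero_left[OF ms] module.scale_zero_left[OF mI])
  qed
  moreover have "G \<subseteq> G'"
  proof
    fix p assume p: "p \<in> G"
    show "p \<in> G'"
      using p memG'[where w="fst p" and y="snd p" and r=0]
      by (simp add: module.scale_zero_left[OF ms] module.scale_zero_left[OF mI])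
  qed
  moreover have "(a, e) \<in> G'"
    using memG'[OF G0, where r=1] by (simp add: module.scale_one[OF ms] module.scale_one[OF mI])
  ultimately show ?thesis by blast
qed

text \<open>This is where Baer's criterion enters: the partial map r \<mapsto> (value of G at r a)
  is defined on an ideal, hence is multiplication by some e in I.\<close>
lemma hom_graph_extend_point:
  assumes inj: "injective_module sI" and G0: "(0, 0) \<in> G"
  shows "\<exists>G' e. hom_graph s sI V f G' \<and> G \<subseteq> G' \<and> (a, e) \<in> G'"
proof -
  define J where "J = {r. \<exists>y. (s r a, y) \<in> G}"
  define h where "h r = (THE y. (s r a, y) \<in> G)" for r
  have hG: "(s r a, h r) \<in> G" if "r \<in> J" for r
    using that hom_graph_unique unfolding J_def h_def by auto
  have h_eq: "h r = y" if "(s r a, y) \<in> G" for r y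
    using that hom_graph_unique unfolding h_def by blast
  have "module.subspace (*) J"
    unfolding module.subspace_def[OF module_mult] J_def
  proof (intro conjI allI ballI)
    show "0 \<in> {r. \<exists>y. (s r a, y) \<in> G}" using G0 by (auto simp: module.scale_zero_left[OF ms])
  next
    fix x y assume "x \<in> {r. \<exists>y. (s r a, y) \<in> G}" "y \<in> {r. \<exists>y. (s r a, y) \<in> G}"
    then show "x + y \<in> {r. \<exists>y. (s r a, y) \<in> G}"
      by (auto simp: module.scale_left_distrib[OF ms] dest: hom_graph_add)
  next
    fix c x assume "x \<in> {r. \<exists>y. (s r a, y) \<in> G}"
    then show "c * x \<in> {r. \<exists>y. (s r a, y) \<in> G}"
      by (auto simp: module.scale_scale[OF ms, symmetric] dest: hom_graph_scale[of _ _ c])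
  qed
  moreover have "\<forall>x\<in>J. \<forall>y\<in>J. h (x + y) = h x + h y"
    using hom_graph_add[OF hG hG] h_eq by (simp add: module.scale_left_distrib[OF ms])
  moreover have "\<forall>c. \<forall>x\<in>J. h (c * x) = sI c (h x)"
    using hom_graph_scale[OF hG] h_eq by (simp add: module.scale_scale[OF ms])
  ultimately obtain g where g: "module_hom (*) sI g" and gh: "\<forall>x\<in>J. g x = h x"
    using inj unfolding injective_module_def by blast
  have "y = sI r (g 1)" if "(s r a, y) \<in> G" for r y
  proof -
    have "g r = sI r (g 1)" using module_hom.scale[OF g, of r 1] by simp
    with that show ?thesis using gh h_eq unfolding J_def by auto
  qed
  then show ?thesis using hom_graph_adjoin[OF G0] by blast
qed

end

end

lemma hom_graph_chain_Union:
  assumes C: "C \<noteq> {}" "subset.chain {G. hom_graph s sI V f G} C"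
  shows "hom_graph s sI V f (\<Union>C)"
proof -
  have CA: "\<And>G. G \<in> C \<Longrightarrow> hom_graph s sI V f G" and tot: "\<forall>X\<in>C. \<forall>Y\<in>C. X \<subseteq> Y \<or> Y \<subseteq> X"
    using C(2) unfolding subset.chain_def by auto
  have common: "\<exists>G\<in>C. p \<in> G \<and> q \<in> G" if "p \<in> \<Union>C" "q \<in> \<Union>C" for p q
    using that tot by blast
  show ?thesis
    unfolding hom_graph_def
  proof (intro conjI allI impI ballI)
    fix a y y' assume "(a,y) \<in> \<Union>C" "(a,y') \<in> \<Union>C"
    then show "y = y'" using common CA hom_graph_functional by metis
  next
    fix a b ya yb assume "(a,ya) \<in> \<Union>C" "(b,yb) \<in> \<Union>C"
    then show "(a+b, ya+yb) \<in> \<Union>C" using common CA hom_graph_add by (metis UnionI)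
  next
    fix c a y assume "(a,y) \<in> \<Union>C"
    then show "(s c a, sI c y) \<in> \<Union>C" using CA hom_graph_scale by blast
  next
    fix a assume "a \<in> V"
    then show "(a, f a) \<in> \<Union>C" using C(1) CA hom_graph_base by blast
  qed
qed

lemma injective_module_extend:
  fixes s :: "'r::comm_ring_1 \<Rightarrow> 'a::ab_group_add \<Rightarrow> 'a" and sI :: "'r \<Rightarrow> 'i::ab_group_add \<Rightarrow> 'i"
  assumes ms: "module s" and mI: "module sI" and inj: "injective_module sI"
    and V: "module.subspace s V" and fadd: "\<forall>a\<in>V. \<forall>b\<in>V. f (a+b) = f a + f b"
    and fsc: "\<forall>c. \<forall>a\<in>V. f (s c a) = sI c (f a)"
  shows "\<exists>g. module_hom s sI g \<and> (\<forall>a\<in>V. g a = f a)"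
proof -
  let ?A = "{G. hom_graph s sI V f G}"
  have "{(a, f a) | a. a \<in> V} \<in> ?A"
    using V fadd fsc unfolding hom_graph_def module.subspace_def[OF ms] by auto
  then have "\<exists>G\<in>?A. \<forall>X\<in>?A. G \<subseteq> X \<longrightarrow> X = G"
    by (intro subset_Zorn_nonempty) (auto intro: hom_graph_chain_Union)
  then obtain G where G: "hom_graph s sI V f G"
    and max: "\<And>X. hom_graph s sI V f X \<Longrightarrow> G \<subseteq> X \<Longrightarrow> X = G"
    by auto
  have G0: "(0, 0) \<in> G" by (rule hom_graph_zero[OF G ms mI V])
  have total: "\<exists>y. (x, y) \<in> G" for x
    using hom_graph_extend_point[OF G ms mI inj G0, of x] max by blast
  define g where "g x = (THE y. (x, y) \<in> G)" for x
  have gG: "(x, g x) \<in> G" for x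
    using total hom_graph_unique[OF G] unfolding g_def by metis
  have g_eq: "g x = y" if "(x, y) \<in> G" for x y
    using that hom_graph_unique[OF G] unfolding g_def by blast
  have "module_hom s sI g"
    unfolding module_hom_iff
    using ms mI g_eq[OF hom_graph_add[OF G gG gG]] g_eq[OF hom_graph_scale[OF G gG]] by blast
  moreover have "\<forall>a\<in>V. g a = f a" using g_eq hom_graph_base[OF G] by blast
  ultimately show ?thesis by blast
qed

lemma injective_factor_through:
  assumes inj: "injective_module sI" and mB: "module sB"
    and D: "module_hom sA sB D" and \<psi>: "module_hom sA sI \<psi>"
    and ker: "\<And>e. D e = 0 \<Longrightarrow> \<psi> e = 0"
  shows "\<exists>\<chi>. module_hom sB sI \<chi> \<and> (\<forall>e. \<chi> (D e) = \<psi> e)"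
proof -
  interpret D: module_hom sA sB D by (fact D)
  interpret \<psi>: module_hom sA sI \<psi> by (fact \<psi>)
  define f where "f v = \<psi> (SOME e. D e = v)" for v
  have fD: "f (D e) = \<psi> e" for e
  proof -
    have "D (SOME e'. D e' = D e) = D e" by (rule someI[of _ e]) simp
    then have "\<psi> ((SOME e'. D e' = D e) - e) = 0" by (intro ker) (simp add: D.diff)
    then show ?thesis unfolding f_def by (simp add: \<psi>.diff)
  qed
  have "module.subspace sB (range D)"
    by (rule D.subspace_image) (rule module.subspace_UNIV[OF D.m1.module_axioms])
  moreover have "\<forall>a\<in>range D. \<forall>b\<in>range D. f (a + b) = f a + f b"
    by (auto simp: D.add[symmetric] fD \<psi>.add)
  moreover have "\<forall>c. \<forall>a\<in>range D. f (sB c a) = sI c (f a)"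
    by (auto simp: D.scale[symmetric] fD \<psi>.scale)
  ultimately obtain \<chi> where "module_hom sB sI \<chi>" "\<forall>a\<in>range D. \<chi> a = f a"
    using injective_module_extend[OF mB \<psi>.m2.module_axioms inj] by blast
  then show ?thesis by (auto simp: fD)
qed

section \<open>Koszul and Cech complexes\<close>

lemma finite_idx_sets: "finite (idx_sets r p)"
  unfolding idx_sets_def by (rule finite_subset[of _ "Pow {0..<r}"]) auto

lemma idx_setsD: "J \<in> idx_sets r p \<Longrightarrow> finite J \<and> J \<subseteq> {0..<r} \<and> card J = p"
  unfolding idx_sets_def using finite_subset by auto

lemma pos_Diff_self: "pos j (J - {j}) = pos j J"
  unfolding pos_def by (rule arg_cong[where f=card]) auto

lemma pos_insert_self: "pos j (insert j J) = pos j J"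
  unfolding pos_def by (rule arg_cong[where f=card]) auto

lemma xprod_remove: "finite J \<Longrightarrow> j \<in> J \<Longrightarrow> xprod xs J = xs ! j * xprod xs (J - {j})"
  by (simp add: xprod_def prod.remove)

lemma nth_powers: "j < length xs \<Longrightarrow> powers xs m ! j = (xs ! j) ^ m"
  by (simp add: powers_def)

lemma length_powers [simp]: "length (powers xs m) = length xs"
  by (simp add: powers_def)

lemma sum_idx_sets_insert:
  "(\<Sum>J\<in>idx_sets r p. \<Sum>j\<in>{0..<r}-J. G (insert j J) j) = (\<Sum>J'\<in>idx_sets r (Suc p). \<Sum>j\<in>J'. G J' j)"
proof -
  have "(\<Sum>J\<in>idx_sets r p. \<Sum>j\<in>{0..<r}-J. G (insert j J) j)
      = (\<Sum>(J,j)\<in>Sigma (idx_sets r p) (\<lambda>J. {0..<r}-J). G (insert j J) j)"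
    by (rule sum.Sigma) (auto simp: finite_idx_sets)
  also have "\<dots> = (\<Sum>(J',j)\<in>Sigma (idx_sets r (Suc p)) (\<lambda>J'. J'). G J' j)"
    by (rule sum.reindex_bij_witness[of _ "\<lambda>(J',j). (J'-{j}, j)" "\<lambda>(J,j). (insert j J, j)"])
      (auto simp: idx_sets_def card_insert_if finite_subset[of _ "{0..<r}"]
        dest: card_Diff1_less[rotated])
  also have "\<dots> = (\<Sum>J'\<in>idx_sets r (Suc p). \<Sum>j\<in>J'. G J' j)"
    by (rule sum.Sigma[symmetric]) (auto simp: finite_idx_sets dest: idx_setsD)
  finally show ?thesis .
qed


lemma cech_num_rescale:
  assumes m: "module s" and fJ: "finite J'"
  shows "cech_num s xs (k + t) (\<lambda>J. s (xprod xs J ^ t) (c J)) J'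
       = s (xprod xs J' ^ t) (cech_num s xs k c J')"
proof -
  have "cech_num s xs (k + t) (\<lambda>J. s (xprod xs J ^ t) (c J)) J'
     = (\<Sum>j\<in>J'. s (xprod xs J' ^ t) (s ((-1) ^ pos j J' * (xs ! j) ^ k) (c (J' - {j}))))"
    unfolding cech_num_def
  proof (rule sum.cong[OF refl])
    fix j assume j: "j \<in> J'"
    have "(-1) ^ pos j J' * xs ! j ^ (k + t) * xprod xs (J' - {j}) ^ t
        = xprod xs J' ^ t * ((-1) ^ pos j J' * xs ! j ^ k)"
      using xprod_remove[OF fJ j, of xs] by (simp add: power_add power_mult_distrib algebra_simps)
    then show "s ((-1) ^ pos j J' * xs ! j ^ (k + t)) (s (xprod xs (J' - {j}) ^ t) (c (J' - {j})))
      = s (xprod xs J' ^ t) (s ((-1) ^ pos j J' * xs ! j ^ k) (c (J' - {j})))"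
      by (simp add: module.scale_scale[OF m])
  qed
  also have "\<dots> = s (xprod xs J' ^ t) (cech_num s xs k c J')"
    unfolding cech_num_def by (simp add: module.scale_sum_right[OF m])
  finally show ?thesis .
qed

lemma cech_cocycle_rescale_exact:
  assumes m: "module s" and c: "cech_cocycle s N xs p k c"
  obtains t where "t > 0"
    "\<forall>J'\<in>idx_sets (length xs) (Suc p). cech_num s xs (k + t) (\<lambda>J. s (xprod xs J ^ t) (c J)) J' = 0"
proof -
  let ?S = "idx_sets (length xs) (Suc p)"
  obtain l where l: "\<forall>J'\<in>?S. s (xprod xs J' ^ l J') (cech_num s xs k c J') = 0"
    using c bchoice unfolding cech_cocycle_def by metis
  define t where "t = Suc (\<Sum>J'\<in>?S. l J')"
  have "cech_num s xs (k + t) (\<lambda>J. s (xprod xs J ^ t) (c J)) J' = 0" if J': "J' \<in> ?S" for J'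
  proof -
    have "l J' \<le> t - 1" unfolding t_def using J' by (simp add: member_le_sum finite_idx_sets)
    then have t: "t = (t - l J') + l J'" unfolding t_def by simp
    have "cech_num s xs (k + t) (\<lambda>J. s (xprod xs J ^ t) (c J)) J'
        = s (xprod xs J' ^ t) (cech_num s xs k c J')"
      using idx_setsD[OF J'] by (simp add: cech_num_rescale[OF m])
    also have "\<dots> = s (xprod xs J' ^ (t - l J')) (s (xprod xs J' ^ l J') (cech_num s xs k c J'))"
      by (subst t) (simp only: power_add module.scale_scale[OF m])
    also have "\<dots> = 0" using l J' by (simp add: module.scale_zero_right[OF m])
    finally show ?thesis .
  qed
  then show thesis using that unfolding t_def by blast
qed

lemma koszul_d_add: "module s \<Longrightarrow> koszul_d s ys (x + y) J = koszul_d s ys x J + koszul_d s ys y J"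
  unfolding koszul_d_def by (simp add: module.scale_right_distrib sum.distrib)

lemma koszul_d_scale: "module s \<Longrightarrow> koszul_d s ys (Hom_scale s a x) J = s a (koszul_d s ys x J)"
  unfolding koszul_d_def by (simp add: module.scale_sum_right module.scale_left_commute[of s _ a])

definition koszul_diff ::
  "('r::comm_ring_1 \<Rightarrow> 'm::ab_group_add \<Rightarrow> 'm) \<Rightarrow> 'r list \<Rightarrow> nat \<Rightarrow> (nat set \<Rightarrow> 'm) \<Rightarrow> nat set \<Rightarrow> 'm"
  where "koszul_diff s ys p e J = (if J \<in> idx_sets (length ys) (p - 1) then koszul_d s ys e J else 0)"

lemma module_hom_koszul_diff:
  assumes m: "module s" shows "module_hom (Hom_scale s) (Hom_scale s) (koszul_diff s ys p)"
  using module_Hom_scale[OF m] m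
  by (simp add: module_hom_iff koszul_diff_def fun_eq_iff koszul_d_add koszul_d_scale
      module.scale_zero_right)

lemma koszul_diff_eq_0_iff: "koszul_diff s ys p e = 0 \<longleftrightarrow> koszul_cycle s ys p e"
  unfolding koszul_diff_def koszul_cycle_def fun_eq_iff by auto

lemma module_hom_koszul_trans:
  assumes m: "module s" shows "module_hom (Hom_scale s) (Hom_scale s) (koszul_trans s xs m n)"
  using module_Hom_scale[OF m]
  by (simp add: module_hom_iff koszul_trans_def fun_eq_iff module.scale_right_distrib[OF m]
      module.scale_left_commute[OF m])

lemma module_hom_fun_upd_zero:
  assumes m: "module s" shows "module_hom s (Hom_scale s) (\<lambda>v. 0(J := v))"
  using m module_Hom_scale[OF m] by (simp add: module_hom_iff fun_eq_iff module.scale_zero_right)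

lemma koszul_diff_fun_upd_zero:
  assumes m: "module s" and J0: "J0 \<in> idx_sets (length xs) p"
  shows "koszul_diff s (powers xs m) p (0(J0 := v))
     = (\<Sum>j\<in>J0. 0(J0 - {j} := s ((-1) ^ pos j J0 * (xs ! j) ^ m) v))"
proof (rule ext)
  fix J
  let ?r = "length xs"
  have J0': "finite J0" "J0 \<subseteq> {0..<?r}" "card J0 = p" using idx_setsD[OF J0] by auto
  have rhs: "(\<Sum>j\<in>J0. 0(J0 - {j} := s ((-1) ^ pos j J0 * (xs ! j) ^ m) v)) J
      = (\<Sum>j\<in>{j\<in>J0. J = J0 - {j}}. s ((-1) ^ pos j J0 * (xs ! j) ^ m) v)"
    unfolding sum_fun_apply by (simp add: sum.inter_filter[OF J0'(1)] zero_fun_def)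
  show "koszul_diff s (powers xs m) p (0(J0 := v)) J
      = (\<Sum>j\<in>J0. 0(J0 - {j} := s ((-1) ^ pos j J0 * (xs ! j) ^ m) v)) J"
  proof (cases "J \<in> idx_sets ?r (p - 1)")
    case True
    have "koszul_d s (powers xs m) (0(J0 := v)) J
        = (\<Sum>j\<in>{j\<in>{0..<?r}-J. insert j J = J0}. s ((-1) ^ pos j J * powers xs m ! j) v)"
      unfolding koszul_d_def sum.inter_filter[OF finite_Diff[OF finite_atLeastLessThan]]
      by (rule sum.cong) (auto simp: module.scale_zero_right[OF m])
    also have "\<dots> = (\<Sum>j\<in>{j\<in>J0. J = J0 - {j}}. s ((-1) ^ pos j J0 * (xs ! j) ^ m) v)"
    proof (rule sum.cong)
      show "{j\<in>{0..<?r}-J. insert j J = J0} = {j\<in>J0. J = J0 - {j}}"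
        using J0' by auto
    next
      fix j assume "j \<in> {j\<in>J0. J = J0 - {j}}"
      then show "s ((-1) ^ pos j J * powers xs m ! j) v = s ((-1) ^ pos j J0 * (xs ! j) ^ m) v"
        using J0' by (auto simp: pos_Diff_self nth_powers)
    qed
    finally show ?thesis using True rhs by (simp add: koszul_diff_def)
  next
    case False
    then have none: "{j\<in>J0. J = J0 - {j}} = {}"
      using J0' by (auto simp: idx_sets_def)
    show ?thesis using False unfolding rhs none by (simp add: koszul_diff_def)
  qed
qed

lemma sum_Hom_koszul_d_eq_cech_num:
  assumes mM: "module sM" and mI: "module sI"
    and d: "\<forall>J\<in>idx_sets (length xs) p. d J \<in> Hom_carrier sM sI"
  shows "(\<Sum>J\<in>idx_sets (length xs) p. d J (koszul_d sM (powers xs K) e J))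
       = (\<Sum>J'\<in>idx_sets (length xs) (Suc p). cech_num (Hom_scale sI) xs K d J' (e J'))"
proof -
  let ?r = "length xs"
  define G where "G J' j = sI ((-1) ^ pos j J' * (xs ! j) ^ K) (d (J' - {j}) (e J'))" for J' j
  have "(\<Sum>J\<in>idx_sets ?r p. d J (koszul_d sM (powers xs K) e J))
      = (\<Sum>J\<in>idx_sets ?r p. \<Sum>j\<in>{0..<?r}-J. G (insert j J) j)"
  proof (rule sum.cong[OF refl])
    fix J assume J: "J \<in> idx_sets ?r p"
    interpret h: module_hom sM sI "d J" using d J unfolding Hom_carrier_def by auto
    show "d J (koszul_d sM (powers xs K) e J) = (\<Sum>j\<in>{0..<?r}-J. G (insert j J) j)"
      unfolding koszul_d_def h.sum h.scale G_def
      by (rule sum.cong) (auto simp: pos_insert_self nth_powers)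
  qed
  also have "\<dots> = (\<Sum>J'\<in>idx_sets ?r (Suc p). \<Sum>j\<in>J'. G J' j)"
    by (rule sum_idx_sets_insert)
  also have "\<dots> = (\<Sum>J'\<in>idx_sets ?r (Suc p). cech_num (Hom_scale sI) xs K d J' (e J'))"
    unfolding cech_num_def G_def by (simp add: sum_fun_apply)
  finally show ?thesis .
qed


section \<open>Vanishing of the higher cohomology\<close>

lemma Hom_exact_cocycle_factor:
  fixes sM :: "'r::comm_ring_1 \<Rightarrow> 'm::ab_group_add \<Rightarrow> 'm" and sI :: "'r \<Rightarrow> 'i::ab_group_add \<Rightarrow> 'i"
  assumes mM: "module sM" and mI: "module sI" and inj: "injective_module sI"
    and dN: "\<forall>J\<in>idx_sets (length xs) p. d J \<in> Hom_carrier sM sI"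
    and d_exact: "\<forall>J'\<in>idx_sets (length xs) (Suc p). cech_num (Hom_scale sI) xs K d J' = 0"
    and trans: "\<forall>z. koszul_cycle sM (powers xs m) p z \<longrightarrow>
      koszul_boundary sM (powers xs K) p (koszul_trans sM xs m K z)"
  obtains \<chi> where "module_hom (Hom_scale sM) sI \<chi>"
    "\<And>e. \<chi> (koszul_diff sM (powers xs m) p e)
       = (\<Sum>J\<in>idx_sets (length xs) p. d J (koszul_trans sM xs m K e J))"
proof -
  let ?S = "idx_sets (length xs)"
  have d_hom: "module_hom sM sI (d J)" if "J \<in> ?S p" for J
    using dN that unfolding Hom_carrier_def by blast
  define \<phi> where "\<phi> e = (\<Sum>J\<in>?S p. d J (e J))" for e :: "nat set \<Rightarrow> 'm"
  have \<phi>_hom: "module_hom (Hom_scale sM) sI \<phi>"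
    unfolding \<phi>_def using module_Hom_scale[OF mM] mI
    by (intro module_pair.module_hom_sum) (auto simp: module_pair_def module_hom_iff
        module_hom.add[OF d_hom] module_hom.scale[OF d_hom])
  have \<phi>_koszul_d: "\<phi> (koszul_d sM (powers xs K) b) = 0" for b
    unfolding \<phi>_def sum_Hom_koszul_d_eq_cech_num[OF mM mI dN] using d_exact by simp
  define \<psi> where "\<psi> = \<phi> \<circ> koszul_trans sM xs m K"
  have \<psi>_hom: "module_hom (Hom_scale sM) sI \<psi>"
    unfolding \<psi>_def by (rule module_hom_compose[OF module_hom_koszul_trans[OF mM] \<phi>_hom])
  have \<psi>_cycle: "\<psi> z = 0" if z: "koszul_diff sM (powers xs m) p z = 0" for z
  proof -
    obtain b where "\<forall>J\<in>?S p. koszul_d sM (powers xs K) b J = koszul_trans sM xs m K z J"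
      using trans z unfolding koszul_diff_eq_0_iff koszul_boundary_def by auto
    then have "\<psi> z = \<phi> (koszul_d sM (powers xs K) b)"
      unfolding \<psi>_def \<phi>_def by simp
    then show ?thesis using \<phi>_koszul_d by simp
  qed
  show thesis
    using injective_factor_through[OF inj module_Hom_scale[OF mM] module_hom_koszul_diff[OF mM]
        \<psi>_hom \<psi>_cycle] that unfolding \<psi>_def \<phi>_def by auto
qed

lemma Hom_exact_cocycle_lift:
  fixes sM :: "'r::comm_ring_1 \<Rightarrow> 'm::ab_group_add \<Rightarrow> 'm" and sI :: "'r \<Rightarrow> 'i::ab_group_add \<Rightarrow> 'i"
  assumes mM: "module sM" and mI: "module sI" and inj: "injective_module sI"
    and dN: "\<forall>J\<in>idx_sets (length xs) p. d J \<in> Hom_carrier sM sI"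
    and d_exact: "\<forall>J'\<in>idx_sets (length xs) (Suc p). cech_num (Hom_scale sI) xs K d J' = 0"
    and trans: "\<forall>z. koszul_cycle sM (powers xs m) p z \<longrightarrow>
      koszul_boundary sM (powers xs K) p (koszul_trans sM xs m K z)"
  shows "\<exists>b. (\<forall>J. b J \<in> Hom_carrier sM sI) \<and> (\<forall>J\<in>idx_sets (length xs) p.
    cech_num (Hom_scale sI) xs m b J = Hom_scale sI (xprod xs J ^ (m - K)) (d J))"
proof -
  let ?S = "idx_sets (length xs)"
  have d_hom: "module_hom sM sI (d J)" if "J \<in> ?S p" for J
    using dN that unfolding Hom_carrier_def by blast
  obtain \<chi> where \<chi>: "module_hom (Hom_scale sM) sI \<chi>"
    and \<chi>_factor: "\<And>e. \<chi> (koszul_diff sM (powers xs m) p e)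
       = (\<Sum>J\<in>?S p. d J (koszul_trans sM xs m K e J))"
    using Hom_exact_cocycle_factor[OF mM mI inj dN d_exact trans] by blast
  define b where "b J v = \<chi> (0(J := v))" for J v
  have b_hom: "module_hom sM sI (b J)" for J
    unfolding b_def using module_hom_compose[OF module_hom_fun_upd_zero[OF mM] \<chi>]
    by (simp add: comp_def)
  have "cech_num (Hom_scale sI) xs m b J0 v = sI (xprod xs J0 ^ (m - K)) (d J0 v)"
    if J0: "J0 \<in> ?S p" for J0 v
  proof -
    have "cech_num (Hom_scale sI) xs m b J0 v
        = \<chi> (\<Sum>j\<in>J0. 0(J0 - {j} := sM ((-1) ^ pos j J0 * (xs ! j) ^ m) v))"
      unfolding cech_num_def sum_fun_apply module_hom.sum[OF \<chi>]
      by (simp add: b_def module_hom.scale[OF b_hom, unfolded b_def])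
    also have "\<dots> = (\<Sum>J\<in>?S p. d J (koszul_trans sM xs m K (0(J0 := v)) J))"
      by (simp add: \<chi>_factor koszul_diff_fun_upd_zero[OF mM J0, symmetric])
    also have "\<dots> = d J0 (sM (xprod xs J0 ^ (m - K)) v)"
      using J0 finite_idx_sets[of "length xs" p]
      by (simp add: koszul_trans_def if_distrib module.scale_zero_right[OF mM]
          module_hom.zero[OF d_hom] cong: if_cong)
    finally show ?thesis by (simp add: module_hom.scale[OF d_hom[OF J0]])
  qed
  then show ?thesis using b_hom unfolding Hom_carrier_def by (auto simp: fun_eq_iff)
qed

lemma Hom_cech_cocycle_is_coboundary:
  fixes sM :: "'r::comm_ring_1 \<Rightarrow> 'm::ab_group_add \<Rightarrow> 'm" and sI :: "'r \<Rightarrow> 'i::ab_group_add \<Rightarrow> 'i"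
  assumes mM: "module sM" and wpr: "weakly_pro_regular sM xs" and mI: "module sI"
    and inj: "injective_module sI" and p: "p \<ge> 1"
    and c: "cech_cocycle (Hom_scale sI) (Hom_carrier sM sI) xs p k c"
  shows "cech_coboundary (Hom_scale sI) (Hom_carrier sM sI) xs p k c"
proof -
  let ?S = "idx_sets (length xs)" and ?s = "Hom_scale sI"
  have ms: "module ?s" by (rule module_Hom_scale[OF mI])
  obtain t where "t > 0"
    and exact: "\<forall>J'\<in>?S (Suc p). cech_num ?s xs (k + t) (\<lambda>J. ?s (xprod xs J ^ t) (c J)) J' = 0"
    using cech_cocycle_rescale_exact[OF ms c] by blast
  have "0 < p" "1 \<le> k + t" using p \<open>t > 0\<close> by simp_all
  then obtain m where "m \<ge> k + t" and trans: "\<forall>z. koszul_cycle sM (powers xs m) p z \<longrightarrow>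
      koszul_boundary sM (powers xs (k + t)) p (koszul_trans sM xs m (k + t) z)"
    using wpr unfolding weakly_pro_regular_def by blast
  have "\<forall>J\<in>?S p. ?s (xprod xs J ^ t) (c J) \<in> Hom_carrier sM sI"
    using c Hom_scale_in_Hom_carrier[OF mM mI] unfolding cech_cocycle_def by blast
  then obtain b where b: "\<forall>J. b J \<in> Hom_carrier sM sI" and b_num: "\<forall>J\<in>?S p.
      cech_num ?s xs m b J = ?s (xprod xs J ^ (m - (k + t))) (?s (xprod xs J ^ t) (c J))"
    using Hom_exact_cocycle_lift[OF mM mI inj _ exact trans] by blast
  have "?s (xprod xs J ^ k) (cech_num ?s xs m b J) = ?s (xprod xs J ^ m) (c J)" if "J \<in> ?S p" for J
    using b_num that \<open>m \<ge> k + t\<close>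
    by (simp add: module.scale_scale[OF ms] power_add[symmetric])
  then show ?thesis
    unfolding cech_coboundary_def using b
    by (intro exI[of _ m] exI[of _ b]) (simp add: module.scale_one[OF ms] module.scale_zero_right[OF ms])
qed

theorem corollary5p4:
  fixes sM :: "'r::comm_ring_1 \<Rightarrow> 'm::ab_group_add \<Rightarrow> 'm"
    and sI :: "'r \<Rightarrow> 'i::ab_group_add \<Rightarrow> 'i"
    and xs :: "'r list"
  assumes "module sM"
    and "weakly_pro_regular sM xs"
    and "module sI"
    and "injective_module sI"
  shows "natural_map_quasi_iso (Hom_scale sI) (Hom_carrier sM sI) xs"
  unfolding natural_map_quasi_iso_def
  using Gamma_eq_cech_cocycles_0[OF module_Hom_scale[OF assms(3)]]
    Hom_cech_cocycle_is_coboundary[OF assms] by blast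

end
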